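(* Let $\varepsilon>0$, $\alpha\in(0,1)$, $y_0\in L^2(\Omega,\mathcal F_0,\mathbb P;L^2(D))$, and let $(\beta^\ast,\eta^\ast)\in\mathcal B\times\mathcal U_M$ be a Nash equilibrium as in the game $\mathcal J_\varepsilon(\eta^\ast;\beta^\ast)=\sup_{\beta\in\mathcal B}\mathcal J_\varepsilon(\eta^\ast;\beta)=\inf_{\eta\in\mathcal U_M}\mathcal J_\varepsilon(\eta;\beta^\ast)$. Define $H(x)=\int_0^T\mathbb E|z(t,x;\eta^\ast)|^2\,dt$ for a.e. $x\in D$, and $c(\alpha)=\sup\{c\ge0:\ |\{H\ge c\}|\ge\alpha|D|\}$. Then $|\{H\ge c(\alpha)\}|\ge\alpha|D|\ge|\{H>c(\alpha)\}|$, and $\theta^\ast:=(\beta^\ast)^2$ satisfies $\theta^\ast=1$ a.e. on $\{H>c(\alpha)\}$ and $\theta^\ast=0$ a.e. on $\{H<c(\alpha)\}$.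
   Context: $(\Omega,\mathcal F,\{\mathcal F_t\}_{t\ge0},\mathbb P)$ is a complete filtered probability space satisfying the usual conditions, carrying a standard one-dimensional Brownian motion $w$, and $\{\mathcal F_t\}$ is the (augmented) filtration generated by $w$. $T>0$ is fixed. $D\subset\mathbb R^d$ is a bounded domain with $C^2$ boundary; $(\cdot,\cdot)$, $\|\cdot\|$ denote the inner product and norm of $L^2(D)$; $|\cdot|$ is Lebesgue measure. $A$ is the Dirichlet Laplacian: $\mathcal D(A)=H^2(D)\cap H^1_0(D)$, $Av=\Delta v$. $a\in L^\infty_{\mathcal F}(0,T;\mathbb R)$ is a bounded real-valued adapted process. $\mathcal B=\{\beta\in L^\infty(D;[0,1]):\ \|\beta\|^2=\alpha|D|\}$; $M>0$ and $\mathcal U_M=\{\eta\in L^2(\Omega,\mathcal F_T,\mathbb P;L^2(D)):\ \mathbb E\|\eta\|^2\le M\}$. For $\eta\in L^2(\Omega,\mathcal F_T,\mathbb P;L^2(D))$, $(z(\cdot;\eta),Z(\cdot;\eta))$ denotes the unique solution in $\big(L^2_{\mathcal F}(\Omega;C([0,T];L^2(D)))\cap L^2_{\mathcal F}(0,T;H^1_0(D))\big)\times L^2_{\mathcal F}(0,T;L^2(D))$ of $dz=-Az\,dt-a(t)Z\,dt+Z\,dw(t)$ on $(0,T)$, $z(T)=\eta$. $\mathcal J_\varepsilon(\eta;\beta)=\frac12\int_0^T\mathbb E\|\beta z(t;\eta)\|^2dt+\varepsilon(\mathbb E\|\eta\|^2)^{1/2}+\mathbb E(y_0,z(0;\eta))$.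 *)

theory Defs
  imports "HOL-Probability.Probability"
begin

text \<open>Random fields f : Omega -> L2(D) are represented as functions 'w => 'x => real.
  The solution map eta |-> z(.;eta) of the backward stochastic heat equation is an abstract
  parameter zsol: zsol eta t omega x = z(t, x; eta)(omega).\<close>

definition Esq :: "'w measure \<Rightarrow> 'x::euclidean_space set \<Rightarrow> ('w \<Rightarrow> 'x \<Rightarrow> real) \<Rightarrow> real" where
  "Esq P D f = (\<integral>p. (f (fst p) (snd p))^2 \<partial>(P \<Otimes>\<^sub>M lebesgue_on D))"

definition L2_space :: "'w measure \<Rightarrow> 'w measure \<Rightarrow> 'x::euclidean_space set \<Rightarrow> ('w \<Rightarrow> 'x \<Rightarrow> real) set" where
  "L2_space F P D = {f. (\<lambda>p. f (fst p) (snd p)) \<in> borel_measurable (F \<Otimes>\<^sub>M lebesgue_on D)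
       \<and> integrable (P \<Otimes>\<^sub>M lebesgue_on D) (\<lambda>p. (f (fst p) (snd p))^2)}"

definition Bset :: "'x::euclidean_space set \<Rightarrow> real \<Rightarrow> ('x \<Rightarrow> real) set" where
  "Bset D \<alpha> = {\<beta>. \<beta> \<in> borel_measurable (lebesgue_on D) \<and> (\<forall>x\<in>D. 0 \<le> \<beta> x \<and> \<beta> x \<le> 1)
       \<and> (\<integral>x. (\<beta> x)^2 \<partial>lebesgue_on D) = \<alpha> * measure lebesgue D}"

definition UM :: "'w measure \<Rightarrow> 'w measure \<Rightarrow> 'x::euclidean_space set \<Rightarrow> real \<Rightarrow> ('w \<Rightarrow> 'x \<Rightarrow> real) set" where
  "UM FT P D M = {\<eta> \<in> L2_space FT P D. Esq P D \<eta> \<le> M}"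

definition sol_regular ::
  "'w measure \<Rightarrow> 'w measure \<Rightarrow> 'x::euclidean_space set \<Rightarrow> real \<Rightarrow>
   (('w \<Rightarrow> 'x \<Rightarrow> real) \<Rightarrow> real \<Rightarrow> 'w \<Rightarrow> 'x \<Rightarrow> real) \<Rightarrow> bool" where
  "sol_regular FT P D T zsol = (\<forall>\<eta>\<in>L2_space FT P D.
      (\<lambda>q. zsol \<eta> (fst q) (fst (snd q)) (snd (snd q)))
          \<in> borel_measurable (lebesgue_on {0..T} \<Otimes>\<^sub>M (P \<Otimes>\<^sub>M lebesgue_on D))
    \<and> integrable (lebesgue_on {0..T} \<Otimes>\<^sub>M (P \<Otimes>\<^sub>M lebesgue_on D))
          (\<lambda>q. (zsol \<eta> (fst q) (fst (snd q)) (snd (snd q)))^2)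
    \<and> (\<lambda>p. zsol \<eta> 0 (fst p) (snd p)) \<in> borel_measurable (P \<Otimes>\<^sub>M lebesgue_on D)
    \<and> integrable (P \<Otimes>\<^sub>M lebesgue_on D) (\<lambda>p. (zsol \<eta> 0 (fst p) (snd p))^2))"

definition Jeps ::
  "'w measure \<Rightarrow> 'x::euclidean_space set \<Rightarrow> real \<Rightarrow>
   (('w \<Rightarrow> 'x \<Rightarrow> real) \<Rightarrow> real \<Rightarrow> 'w \<Rightarrow> 'x \<Rightarrow> real) \<Rightarrow> real \<Rightarrow> ('w \<Rightarrow> 'x \<Rightarrow> real) \<Rightarrow>
   ('w \<Rightarrow> 'x \<Rightarrow> real) \<Rightarrow> ('x \<Rightarrow> real) \<Rightarrow> real" where
  "Jeps P D T zsol \<epsilon> y0 \<eta> \<beta> =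
     1/2 * (\<integral>t. Esq P D (\<lambda>\<omega> x. \<beta> x * zsol \<eta> t \<omega> x) \<partial>lebesgue_on {0..T})
     + \<epsilon> * sqrt (Esq P D \<eta>)
     + (\<integral>p. y0 (fst p) (snd p) * zsol \<eta> 0 (fst p) (snd p) \<partial>(P \<Otimes>\<^sub>M lebesgue_on D))"

definition Hfun ::
  "'w measure \<Rightarrow> real \<Rightarrow> (('w \<Rightarrow> 'x \<Rightarrow> real) \<Rightarrow> real \<Rightarrow> 'w \<Rightarrow> 'x \<Rightarrow> real) \<Rightarrow>
   ('w \<Rightarrow> 'x \<Rightarrow> real) \<Rightarrow> 'x \<Rightarrow> real" where
  "Hfun P T zsol \<eta> x = (\<integral>t. (\<integral>\<omega>. (zsol \<eta> t \<omega> x)^2 \<partial>P) \<partial>lebesgue_on {0..T})"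

definition c_alpha :: "'x::euclidean_space set \<Rightarrow> ('x \<Rightarrow> real) \<Rightarrow> real \<Rightarrow> real" where
  "c_alpha D H \<alpha> = Sup {c. 0 \<le> c \<and> \<alpha> * measure lebesgue D \<le> measure lebesgue {x\<in>D. c \<le> H x}}"

end

theory Submission
  imports Defs
begin

text \<open>By Tonelli, the cost splits as
  \<open>J(\<eta>*; \<beta>) = 1/2 \<integral>\<^sub>D \<beta>\<^sup>2 H + (terms independent of \<beta>)\<close>, so \<open>\<theta>* = \<beta>*\<^sup>2\<close> maximises
  \<open>\<integral>\<^sub>D \<theta> H\<close> among measurable \<open>0 \<le> \<theta> \<le> 1\<close> of mass \<open>\<alpha>|D|\<close>. Continuity of measure along the
  superlevel sets \<open>{H \<ge> c(\<alpha>) \<mp> 1/n}\<close> gives \<open>|{H > c}| \<le> \<alpha>|D| \<le> |{H \<ge> c}|\<close>, so the bathtub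
  competitor \<open>\<theta>' = 1 on {H > c}\<close>, \<open>0 on {H < c}\<close>, suitably filled on \<open>{H = c}\<close>, has the same mass.
  Then \<open>(\<theta>' - \<theta>*)(H - c) \<ge> 0\<close> pointwise while its integral is \<open>\<le> 0\<close> by optimality of \<open>\<theta>*\<close>;
  hence it vanishes a.e., which forces \<open>\<theta>* = 1\<close> on \<open>{H > c}\<close> and \<open>\<theta>* = 0\<close> on \<open>{H < c}\<close>.\<close>

section \<open>Iterated integrals\<close>

lemma nn_integral_reorder_triple:
  fixes f :: "'a \<times> 'b \<times> 'c \<Rightarrow> ennreal"
  assumes "sigma_finite_measure M1" "sigma_finite_measure M2" "sigma_finite_measure M3"
    and f[measurable]: "f \<in> borel_measurable (M1 \<Otimes>\<^sub>M (M2 \<Otimes>\<^sub>M M3))"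
  shows "(\<integral>\<^sup>+q. f q \<partial>(M1 \<Otimes>\<^sub>M (M2 \<Otimes>\<^sub>M M3)))
       = (\<integral>\<^sup>+x. (\<integral>\<^sup>+t. (\<integral>\<^sup>+\<omega>. f (t, \<omega>, x) \<partial>M2) \<partial>M1) \<partial>M3)"
proof -
  interpret M1: sigma_finite_measure M1 by fact
  interpret M2: sigma_finite_measure M2 by fact
  interpret M3: sigma_finite_measure M3 by fact
  interpret M23: pair_sigma_finite M2 M3 ..
  interpret M13: pair_sigma_finite M1 M3 ..
  have "(\<integral>\<^sup>+q. f q \<partial>(M1 \<Otimes>\<^sub>M (M2 \<Otimes>\<^sub>M M3))) = (\<integral>\<^sup>+t. (\<integral>\<^sup>+y. f (t, y) \<partial>(M2 \<Otimes>\<^sub>M M3)) \<partial>M1)"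
    by (rule M23.P.nn_integral_fst[symmetric]) simp
  also have "\<dots> = (\<integral>\<^sup>+t. (\<integral>\<^sup>+x. (\<integral>\<^sup>+\<omega>. f (t, \<omega>, x) \<partial>M2) \<partial>M3) \<partial>M1)"
    by (intro nn_integral_cong M23.nn_integral_snd[symmetric]) measurable
  also have "\<dots> = (\<integral>\<^sup>+x. (\<integral>\<^sup>+t. (\<integral>\<^sup>+\<omega>. f (t, \<omega>, x) \<partial>M2) \<partial>M1) \<partial>M3)"
    by (rule M13.Fubini'[symmetric]) measurable
  finally show ?thesis .
qed

lemma iterated_integral_eq_nn_integral:
  fixes g :: "'a \<Rightarrow> 'b \<Rightarrow> real"
  assumes "sigma_finite_measure M2"
    and g: "case_prod g \<in> borel_measurable (M1 \<Otimes>\<^sub>M M2)" and nonneg: "\<And>t \<omega>. 0 \<le> g t \<omega>"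
    and fin: "(\<integral>\<^sup>+t. (\<integral>\<^sup>+\<omega>. g t \<omega> \<partial>M2) \<partial>M1) \<noteq> \<infinity>"
  shows "ennreal (\<integral>t. (\<integral>\<omega>. g t \<omega> \<partial>M2) \<partial>M1) = (\<integral>\<^sup>+t. (\<integral>\<^sup>+\<omega>. g t \<omega> \<partial>M2) \<partial>M1)"
proof -
  interpret M2: sigma_finite_measure M2 by fact
  define G where "G t = (\<integral>\<^sup>+\<omega>. g t \<omega> \<partial>M2)" for t
  have G[measurable]: "G \<in> borel_measurable M1"
    unfolding G_def using g by measurable
  have G_fin: "AE t in M1. G t \<noteq> \<infinity>"
    by (rule nn_integral_PInf_AE[OF G]) (use fin in \<open>simp add: G_def[abs_def]\<close>)
  have inner: "(\<integral>\<omega>. g t \<omega> \<partial>M2) = enn2real (G t)" if "t \<in> space M1" for t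
    unfolding G_def by (rule integral_eq_nn_integral) (use measurable_Pair2[OF g that] nonneg in auto)
  have "(\<integral>t. (\<integral>\<omega>. g t \<omega> \<partial>M2) \<partial>M1) = enn2real (\<integral>\<^sup>+t. ennreal (enn2real (G t)) \<partial>M1)"
    by (subst Bochner_Integration.integral_cong[OF refl inner], assumption)
       (rule integral_eq_nn_integral, auto)
  also have "(\<integral>\<^sup>+t. ennreal (enn2real (G t)) \<partial>M1) = (\<integral>\<^sup>+t. G t \<partial>M1)"
    by (rule nn_integral_cong_AE) (use G_fin in \<open>auto simp: less_top\<close>)
  finally show ?thesis using fin by (simp add: G_def less_top)
qed

section \<open>Superlevel thresholds and the bathtub principle\<close>

lemma inverse_Suc_antimono: "m \<le> n \<Longrightarrow> 1 / real (Suc n) \<le> 1 / real (Suc m)"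
  by (simp add: frac_le)

definition superlevel_threshold :: "'a measure \<Rightarrow> ('a \<Rightarrow> real) \<Rightarrow> real \<Rightarrow> real" where
  "superlevel_threshold M H a = Sup {c. 0 \<le> c \<and> a \<le> measure M {x\<in>space M. c \<le> H x}}"

context finite_measure
begin

lemma measure_superlevel_antimono:
  fixes H :: "'a \<Rightarrow> real"
  assumes [measurable]: "H \<in> borel_measurable M" and "c \<le> d"
  shows "measure M {x\<in>space M. d \<le> H x} \<le> measure M {x\<in>space M. c \<le> H x}"
  using \<open>c \<le> d\<close> by (intro finite_measure_mono) auto

lemma bdd_above_superlevel_thresholds:
  fixes H :: "'a \<Rightarrow> real"
  assumes [measurable]: "H \<in> borel_measurable M" and "0 < a"
  shows "bdd_above {c. a \<le> measure M {x\<in>space M. c \<le> H x}}"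
proof -
  have "(\<lambda>n. measure M {x\<in>space M. real n \<le> H x}) \<longlonglongrightarrow> measure M (\<Inter>n. {x\<in>space M. real n \<le> H x})"
    by (rule finite_Lim_measure_decseq) (auto simp: decseq_def)
  moreover have "(\<Inter>n. {x\<in>space M. real n \<le> H x}) = {}"
  proof safe
    fix x assume "x \<in> (\<Inter>n. {x\<in>space M. real n \<le> H x})"
    moreover obtain n where "H x < real n" using reals_Archimedean2 by blast
    ultimately show "x \<in> {}" by (auto simp: not_le[symmetric])
  qed
  ultimately have "(\<lambda>n. measure M {x\<in>space M. real n \<le> H x}) \<longlonglongrightarrow> 0"
    by simp
  from order_tendstoD(2)[OF this \<open>0 < a\<close>]
  obtain n where n: "measure M {x\<in>space M. real n \<le> H x} < a"
    by (auto simp: eventually_sequentially)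
  have "c \<le> real n" if "a \<le> measure M {x\<in>space M. c \<le> H x}" for c
    using measure_superlevel_antimono[of H "real n" c] n that by (cases "c \<le> real n") auto
  then show ?thesis by (auto simp: bdd_above_def)
qed

lemma measure_superlevel_zero:
  fixes H :: "'a \<Rightarrow> real"
  assumes "\<And>x. x \<in> space M \<Longrightarrow> 0 \<le> H x" and "a \<le> measure M (space M)"
  shows "a \<le> measure M {x\<in>space M. 0 \<le> H x}"
proof -
  have "{x\<in>space M. 0 \<le> H x} = space M" using assms(1) by auto
  then show ?thesis using assms(2) by simp
qed

lemma superlevel_threshold_upper:
  fixes H :: "'a \<Rightarrow> real"
  assumes [measurable]: "H \<in> borel_measurable M" and "0 < a"
    and "0 \<le> c" "a \<le> measure M {x\<in>space M. c \<le> H x}"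
  shows "c \<le> superlevel_threshold M H a"
  unfolding superlevel_threshold_def
  by (rule cSup_upper) (use assms bdd_above_superlevel_thresholds[of H a] in \<open>auto intro: bdd_above_mono\<close>)

lemma superlevel_threshold_nonneg:
  fixes H :: "'a \<Rightarrow> real"
  assumes "H \<in> borel_measurable M" "0 < a" and "\<And>x. x \<in> space M \<Longrightarrow> 0 \<le> H x"
    and "a \<le> measure M (space M)"
  shows "0 \<le> superlevel_threshold M H a"
  by (rule superlevel_threshold_upper) (use assms measure_superlevel_zero in auto)

lemma measure_superlevel_threshold_ge:
  fixes H :: "'a \<Rightarrow> real"
  assumes [measurable]: "H \<in> borel_measurable M" and "0 < a"
    and "\<And>x. x \<in> space M \<Longrightarrow> 0 \<le> H x" and "a \<le> measure M (space M)"
  shows "a \<le> measure M {x\<in>space M. superlevel_threshold M H a \<le> H x}"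
proof -
  define c where "c = superlevel_threshold M H a"
  define L where "L n = {x\<in>space M. c - 1 / Suc n \<le> H x}" for n :: nat
  have "a \<le> measure M (L n)" for n
  proof -
    have "0 \<le> c" unfolding c_def by (rule superlevel_threshold_nonneg) (use assms in auto)
    have "c - 1 / Suc n < Sup {c. 0 \<le> c \<and> a \<le> measure M {x\<in>space M. c \<le> H x}}"
      by (simp add: c_def superlevel_threshold_def)
    then obtain s where s: "0 \<le> s" "a \<le> measure M {x\<in>space M. s \<le> H x}" "c - 1 / Suc n < s"
      using less_cSupD[of "{c. 0 \<le> c \<and> a \<le> measure M {x\<in>space M. c \<le> H x}}"]
        measure_superlevel_zero[of H a] assms by auto
    then show ?thesis
      unfolding L_def using measure_superlevel_antimono[of H "c - 1 / Suc n" s] by simp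
  qed
  moreover have "(\<lambda>n. measure M (L n)) \<longlonglongrightarrow> measure M (\<Inter>n. L n)"
    using inverse_Suc_antimono by (intro finite_Lim_measure_decseq) (auto simp: L_def decseq_def intro: order_trans[rotated])
  moreover have "(\<Inter>n. L n) = {x\<in>space M. c \<le> H x}"
  proof safe
    fix x assume x: "x \<in> (\<Inter>n. L n)"
    show "c \<le> H x"
    proof (rule ccontr)
      assume "\<not> c \<le> H x"
      then obtain n where "1 / Suc n < c - H x" using nat_approx_posE[of "c - H x"] by auto
      moreover have "c - 1 / Suc n \<le> H x" using x by (auto simp: L_def)
      ultimately show False by simp
    qed
  qed (auto simp: L_def intro: order_trans[rotated])
  ultimately show ?thesis
    unfolding c_def by (metis LIMSEQ_le_const)
qed

lemma measure_strict_superlevel_threshold_le: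
  fixes H :: "'a \<Rightarrow> real"
  assumes [measurable]: "H \<in> borel_measurable M" and "0 < a"
    and "\<And>x. x \<in> space M \<Longrightarrow> 0 \<le> H x" and "a \<le> measure M (space M)"
  shows "measure M {x\<in>space M. superlevel_threshold M H a < H x} \<le> a"
proof -
  define c where "c = superlevel_threshold M H a"
  define L where "L n = {x\<in>space M. c + 1 / Suc n \<le> H x}" for n :: nat
  have "measure M (L n) \<le> a" for n
  proof (rule ccontr)
    assume "\<not> measure M (L n) \<le> a"
    moreover have "0 \<le> c" unfolding c_def by (rule superlevel_threshold_nonneg) (use assms in auto)
    ultimately have "c + 1 / Suc n \<le> c"
      unfolding L_def c_def by (intro superlevel_threshold_upper) (use assms in auto)
    then show False by simp
  qed
  moreover have "(\<lambda>n. measure M (L n)) \<longlonglongrightarrow> measure M (\<Union>n. L n)"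
    using inverse_Suc_antimono by (intro finite_Lim_measure_incseq) (auto simp: L_def incseq_def intro: order_trans[rotated])
  moreover have "(\<Union>n. L n) = {x\<in>space M. c < H x}"
  proof safe
    fix x assume "x \<in> space M" "c < H x"
    then obtain n where "1 / Suc n < H x - c" using nat_approx_posE[of "H x - c"] by auto
    with \<open>x \<in> space M\<close> show "x \<in> (\<Union>n. L n)" by (auto simp: L_def intro!: exI[of _ n])
  qed (auto simp: L_def intro: less_le_trans[rotated])
  ultimately show ?thesis
    unfolding c_def by (metis LIMSEQ_le_const2)
qed

lemma bathtub_competitor:
  fixes H :: "'a \<Rightarrow> real"
  assumes [measurable]: "H \<in> borel_measurable M"
    and upper: "measure M {x\<in>space M. c < H x} \<le> a" and lower: "a \<le> measure M {x\<in>space M. c \<le> H x}"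
  obtains \<theta> where "\<theta> \<in> borel_measurable M" "\<And>x. 0 \<le> \<theta> x \<and> \<theta> x \<le> 1" "(\<integral>x. \<theta> x \<partial>M) = a"
    "\<And>x. x \<in> space M \<Longrightarrow> c < H x \<Longrightarrow> \<theta> x = 1"
    "\<And>x. x \<in> space M \<Longrightarrow> H x < c \<Longrightarrow> \<theta> x = 0"
proof -
  define A where "A = {x\<in>space M. c < H x}"
  define B where "B = {x\<in>space M. H x = c}"
  have [measurable]: "A \<in> sets M" "B \<in> sets M" by (auto simp: A_def B_def)
  have "{x\<in>space M. c \<le> H x} = A \<union> B" by (auto simp: A_def B_def)
  moreover have "measure M (A \<union> B) = measure M A + measure M B"
    by (rule finite_measure_Union) (auto simp: A_def B_def)
  ultimately have lower': "a \<le> measure M A + measure M B"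
    using lower by simp
  define s where "s = (if measure M B = 0 then 0 else (a - measure M A) / measure M B)"
  \<comment> \<open>the fraction of the level set \<open>{H = c}\<close> that has to be filled to reach mass \<open>a\<close>\<close>
  have s: "0 \<le> s" "s \<le> 1" "measure M A + s * measure M B = a"
    using lower' upper by (auto simp: s_def A_def divide_le_eq_1)
  define \<theta> where "\<theta> = (\<lambda>x. indicator A x + s * indicator B x :: real)"
  show ?thesis
  proof (rule that)
    show "\<theta> \<in> borel_measurable M" unfolding \<theta>_def by measurable
    show "0 \<le> \<theta> x \<and> \<theta> x \<le> 1" for x
      using s by (cases "x \<in> A"; cases "x \<in> B") (auto simp: \<theta>_def A_def B_def)
    show "(\<integral>x. \<theta> x \<partial>M) = a"
      using s(3) by (simp add: \<theta>_def emeasure_eq_measure)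
    show "\<theta> x = 1" if "x \<in> space M" "c < H x" for x
      using that by (auto simp: \<theta>_def A_def B_def indicator_def)
    show "\<theta> x = 0" if "x \<in> space M" "H x < c" for x
      using that by (auto simp: \<theta>_def A_def B_def indicator_def)
  qed
qed

lemma bathtub_bang_bang:
  fixes H \<theta> \<theta>' :: "'a \<Rightarrow> real"
  assumes H: "integrable M H" and [measurable]: "\<theta> \<in> borel_measurable M" "\<theta>' \<in> borel_measurable M"
    and \<theta>_range: "\<And>x. x \<in> space M \<Longrightarrow> 0 \<le> \<theta> x \<and> \<theta> x \<le> 1"
    and \<theta>'_range: "\<And>x. 0 \<le> \<theta>' x \<and> \<theta>' x \<le> 1"
    and same_mass: "(\<integral>x. \<theta>' x \<partial>M) = (\<integral>x. \<theta> x \<partial>M)"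
    and \<theta>'_top: "\<And>x. x \<in> space M \<Longrightarrow> c < H x \<Longrightarrow> \<theta>' x = 1"
    and \<theta>'_bottom: "\<And>x. x \<in> space M \<Longrightarrow> H x < c \<Longrightarrow> \<theta>' x = 0"
    and optimal: "(\<integral>x. \<theta>' x * H x \<partial>M) \<le> (\<integral>x. \<theta> x * H x \<partial>M)"
  shows "AE x in M. c < H x \<longrightarrow> \<theta> x = 1" "AE x in M. H x < c \<longrightarrow> \<theta> x = 0"
proof -
  have [measurable]: "H \<in> borel_measurable M" using H by (rule borel_measurable_integrable)
  define g where "g x = (\<theta>' x - \<theta> x) * (H x - c)" for x
  have g_nonneg: "0 \<le> g x" if "x \<in> space M" for x
    using \<theta>_range[OF that] \<theta>'_range[of x] \<theta>'_top[OF that] \<theta>'_bottom[OF that]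
    by (cases "H x" c rule: linorder_cases) (auto simp: g_def intro: mult_nonpos_nonpos mult_nonneg_nonpos)
  have integrable_weighted: "integrable M (\<lambda>x. f x * H x)"
    if [measurable]: "f \<in> borel_measurable M" and "\<And>x. x \<in> space M \<Longrightarrow> 0 \<le> f x \<and> f x \<le> 1"
    for f :: "'a \<Rightarrow> real"
    by (rule Bochner_Integration.integrable_bound[OF H])
       (use that in \<open>auto simp: abs_mult intro!: AE_I2 mult_left_le_one_le\<close>)
  have integrable_unit: "integrable M f"
    if [measurable]: "f \<in> borel_measurable M" and "\<And>x. x \<in> space M \<Longrightarrow> 0 \<le> f x \<and> f x \<le> 1"
    for f :: "'a \<Rightarrow> real"
    by (rule integrable_const_bound[where B=1]) (use that in auto)
  have integrable: "integrable M \<theta>" "integrable M \<theta>'"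
    "integrable M (\<lambda>x. \<theta> x * H x)" "integrable M (\<lambda>x. \<theta>' x * H x)"
    using \<theta>_range \<theta>'_range by (auto intro!: integrable_unit integrable_weighted)
  have g_eq: "g = (\<lambda>x. (\<theta>' x * H x - \<theta> x * H x) - (c * \<theta>' x - c * \<theta> x))"
    by (auto simp: g_def fun_eq_iff algebra_simps)
  have g_integrable: "integrable M g"
    unfolding g_eq using integrable by auto
  have "(\<integral>x. g x \<partial>M) = (\<integral>x. \<theta>' x * H x \<partial>M) - (\<integral>x. \<theta> x * H x \<partial>M)"
    unfolding g_eq using integrable same_mass by simp
  then have "(\<integral>x. g x \<partial>M) \<le> 0" using optimal by simp
  moreover have "0 \<le> (\<integral>x. g x \<partial>M)"
    using g_nonneg by (intro integral_nonneg_AE AE_I2)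
  ultimately have "(\<integral>x. g x \<partial>M) = 0" by (rule antisym)
  then have "AE x in M. g x = 0"
    using integral_nonneg_eq_0_iff_AE[OF g_integrable] g_nonneg by (simp add: AE_I2)
  then show "AE x in M. c < H x \<longrightarrow> \<theta> x = 1" "AE x in M. H x < c \<longrightarrow> \<theta> x = 0"
    by (auto elim!: AE_mp[OF _ AE_I2] simp: g_def \<theta>'_top \<theta>'_bottom)
qed

end

lemma measure_lebesgue_on_subset:
  assumes "D \<in> sets lebesgue" "A \<subseteq> D"
  shows "measure (lebesgue_on D) A = measure lebesgue A"
  using assms by (subst measure_restrict_space) auto

lemma c_alpha_eq_superlevel_threshold:
  assumes "D \<in> sets lebesgue"
  shows "c_alpha D H \<alpha> = superlevel_threshold (lebesgue_on D) H (\<alpha> * measure lebesgue D)"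
  unfolding c_alpha_def superlevel_threshold_def
  using measure_lebesgue_on_subset[OF assms] by simp

lemma c_alpha_superlevel_bounds:
  fixes H :: "'x::euclidean_space \<Rightarrow> real"
  assumes D: "D \<in> lmeasurable" "0 < measure lebesgue D" and \<alpha>: "0 < \<alpha>" "\<alpha> \<le> 1"
    and H: "H \<in> borel_measurable (lebesgue_on D)" "\<And>x. 0 \<le> H x"
  shows "\<alpha> * measure lebesgue D \<le> measure lebesgue {x\<in>D. c_alpha D H \<alpha> \<le> H x}"
    "measure lebesgue {x\<in>D. c_alpha D H \<alpha> < H x} \<le> \<alpha> * measure lebesgue D"
proof -
  interpret N: finite_measure "lebesgue_on D" by (rule finite_measure_lebesgue_on[OF D(1)])
  have D_sets: "D \<in> sets lebesgue" using D(1) by (simp add: fmeasurable_def)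
  have mass: "0 < \<alpha> * measure lebesgue D"
    "\<alpha> * measure lebesgue D \<le> measure (lebesgue_on D) (space (lebesgue_on D))"
    using \<alpha> D(2) by (simp_all add: measure_lebesgue_on_subset[OF D_sets])
  show "\<alpha> * measure lebesgue D \<le> measure lebesgue {x\<in>D. c_alpha D H \<alpha> \<le> H x}"
    using N.measure_superlevel_threshold_ge[OF H(1) mass(1) _ mass(2)] H(2)
    by (simp add: c_alpha_eq_superlevel_threshold[OF D_sets] measure_lebesgue_on_subset[OF D_sets])
  show "measure lebesgue {x\<in>D. c_alpha D H \<alpha> < H x} \<le> \<alpha> * measure lebesgue D"
    using N.measure_strict_superlevel_threshold_le[OF H(1) mass(1) _ mass(2)] H(2)
    by (simp add: c_alpha_eq_superlevel_threshold[OF D_sets] measure_lebesgue_on_subset[OF D_sets])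
qed

lemma measure_lebesgue_pos_open:
  assumes "open D" "bounded D" "D \<noteq> {}"
  shows "0 < measure lebesgue D"
proof -
  obtain x e where "0 < e" "ball x e \<subseteq> D"
    using assms(1,3) open_contains_ball by blast
  then have "0 < measure lebesgue (ball x e)" using content_ball_pos by simp
  also have "\<dots> \<le> measure lebesgue D"
    using \<open>ball x e \<subseteq> D\<close> lmeasurable_open[OF assms(2,1)] by (intro measure_mono_fmeasurable) auto
  finally show ?thesis .
qed

lemma Bset_maximiser_bang_bang:
  fixes H \<beta> :: "'x::euclidean_space \<Rightarrow> real"
  assumes D: "D \<in> lmeasurable" and H: "integrable (lebesgue_on D) H"
    and upper: "measure lebesgue {x\<in>D. c < H x} \<le> \<alpha> * measure lebesgue D"
    and lower: "\<alpha> * measure lebesgue D \<le> measure lebesgue {x\<in>D. c \<le> H x}"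
    and \<beta>: "\<beta> \<in> Bset D \<alpha>"
    and maximal: "\<forall>\<beta>'\<in>Bset D \<alpha>. (\<integral>x. (\<beta>' x)^2 * H x \<partial>lebesgue_on D) \<le> (\<integral>x. (\<beta> x)^2 * H x \<partial>lebesgue_on D)"
  shows "AE x in lebesgue. x \<in> D \<and> c < H x \<longrightarrow> (\<beta> x)^2 = 1"
    "AE x in lebesgue. x \<in> D \<and> H x < c \<longrightarrow> (\<beta> x)^2 = 0"
proof -
  interpret N: finite_measure "lebesgue_on D" by (rule finite_measure_lebesgue_on[OF D])
  have D_sets: "D \<in> sets lebesgue" using D by (simp add: fmeasurable_def)
  have H_measurable[measurable]: "H \<in> borel_measurable (lebesgue_on D)"
    using H by (rule borel_measurable_integrable)
  have upper': "measure (lebesgue_on D) {x\<in>space (lebesgue_on D). c < H x} \<le> \<alpha> * measure lebesgue D"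
    and lower': "\<alpha> * measure lebesgue D \<le> measure (lebesgue_on D) {x\<in>space (lebesgue_on D). c \<le> H x}"
    using upper lower by (simp_all add: measure_lebesgue_on_subset[OF D_sets])
  have [measurable]: "\<beta> \<in> borel_measurable (lebesgue_on D)" using \<beta> by (simp add: Bset_def)
  obtain \<theta> where [measurable]: "\<theta> \<in> borel_measurable (lebesgue_on D)"
    and \<theta>_range: "\<And>x. 0 \<le> \<theta> x \<and> \<theta> x \<le> 1" and \<theta>_mass: "(\<integral>x. \<theta> x \<partial>lebesgue_on D) = \<alpha> * measure lebesgue D"
    and \<theta>_top: "\<And>x. x \<in> space (lebesgue_on D) \<Longrightarrow> c < H x \<Longrightarrow> \<theta> x = 1"
    and \<theta>_bottom: "\<And>x. x \<in> space (lebesgue_on D) \<Longrightarrow> H x < c \<Longrightarrow> \<theta> x = 0"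
    using N.bathtub_competitor[OF H_measurable upper' lower'] by blast
  have sqrt_\<theta>: "(\<lambda>x. sqrt (\<theta> x)) \<in> Bset D \<alpha>"
    using \<theta>_range \<theta>_mass by (auto simp: Bset_def)
  have \<beta>_range: "0 \<le> (\<beta> x)^2 \<and> (\<beta> x)^2 \<le> 1" if "x \<in> space (lebesgue_on D)" for x
    using \<beta> that by (auto simp: Bset_def power_le_one)
  have same_mass: "(\<integral>x. \<theta> x \<partial>lebesgue_on D) = (\<integral>x. (\<beta> x)^2 \<partial>lebesgue_on D)"
    using \<beta> \<theta>_mass by (simp add: Bset_def)
  have optimal: "(\<integral>x. \<theta> x * H x \<partial>lebesgue_on D) \<le> (\<integral>x. (\<beta> x)^2 * H x \<partial>lebesgue_on D)"
    using maximal sqrt_\<theta> \<theta>_range by auto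
  have DN: "D \<inter> space lebesgue \<in> sets lebesgue" using D_sets by simp
  have bang_bang: "AE x in lebesgue_on D. c < H x \<longrightarrow> (\<beta> x)^2 = 1"
    "AE x in lebesgue_on D. H x < c \<longrightarrow> (\<beta> x)^2 = 0"
    by (rule N.bathtub_bang_bang[OF H _ _ \<beta>_range \<theta>_range same_mass \<theta>_top \<theta>_bottom optimal]; measurable)+
  show "AE x in lebesgue. x \<in> D \<and> c < H x \<longrightarrow> (\<beta> x)^2 = 1"
    using bang_bang(1) unfolding AE_restrict_space_iff[OF DN] by (simp add: imp_conjL)
  show "AE x in lebesgue. x \<in> D \<and> H x < c \<longrightarrow> (\<beta> x)^2 = 0"
    using bang_bang(2) unfolding AE_restrict_space_iff[OF DN] by (simp add: imp_conjL)
qed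

section \<open>The adjoint state\<close>

locale adjoint_state =
  fixes P :: "'w measure" and D :: "'x::euclidean_space set" and T :: real
    and zsol :: "('w \<Rightarrow> 'x \<Rightarrow> real) \<Rightarrow> real \<Rightarrow> 'w \<Rightarrow> 'x \<Rightarrow> real" and \<eta> :: "'w \<Rightarrow> 'x \<Rightarrow> real"
  assumes prob: "prob_space P" and D_lmeasurable: "D \<in> lmeasurable"
    and measurable_state: "(\<lambda>q. zsol \<eta> (fst q) (fst (snd q)) (snd (snd q)))
          \<in> borel_measurable (lebesgue_on {0..T} \<Otimes>\<^sub>M (P \<Otimes>\<^sub>M lebesgue_on D))"
    and integrable_state: "integrable (lebesgue_on {0..T} \<Otimes>\<^sub>M (P \<Otimes>\<^sub>M lebesgue_on D))
          (\<lambda>q. (zsol \<eta> (fst q) (fst (snd q)) (snd (snd q)))^2)"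
begin

abbreviation "z \<equiv> zsol \<eta>"
abbreviation "H \<equiv> Hfun P T zsol \<eta>"
abbreviation "H_nn x \<equiv> \<integral>\<^sup>+t. (\<integral>\<^sup>+\<omega>. (z t \<omega> x)^2 \<partial>P) \<partial>lebesgue_on {0..T}"
abbreviation "Q \<equiv> lebesgue_on {0..T} \<Otimes>\<^sub>M (P \<Otimes>\<^sub>M lebesgue_on D)"

sublocale P: prob_space P by (rule prob)
sublocale time: finite_measure "lebesgue_on {0..T}"
  by (rule finite_measure_lebesgue_on) simp
sublocale space: finite_measure "lebesgue_on D"
  by (rule finite_measure_lebesgue_on[OF D_lmeasurable])

declare measurable_state[measurable]

lemma measurable_state_split[measurable]:
  "(\<lambda>(t, \<omega>, x). z t \<omega> x) \<in> borel_measurable Q"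
  using measurable_state by (simp add: case_prod_beta)

lemma measurable_state_swapped[measurable]:
  "(\<lambda>p. z (snd (fst p)) (snd p) (fst (fst p)))
     \<in> borel_measurable ((lebesgue_on D \<Otimes>\<^sub>M lebesgue_on {0..T}) \<Otimes>\<^sub>M P)"
proof -
  have "(\<lambda>p. (snd (fst p), snd p, fst (fst p))) \<in> (lebesgue_on D \<Otimes>\<^sub>M lebesgue_on {0..T}) \<Otimes>\<^sub>M P
      \<rightarrow>\<^sub>M lebesgue_on {0..T} \<Otimes>\<^sub>M (P \<Otimes>\<^sub>M lebesgue_on D)"
    by measurable
  from measurable_compose[OF this measurable_state] show ?thesis by simp
qed

lemma measurable_state_section[measurable]:
  assumes [measurable]: "x \<in> space (lebesgue_on D)"
  shows "(\<lambda>(t, \<omega>). z t \<omega> x) \<in> borel_measurable (lebesgue_on {0..T} \<Otimes>\<^sub>M P)"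
proof -
  have "(\<lambda>p. (fst p, snd p, x)) \<in> lebesgue_on {0..T} \<Otimes>\<^sub>M P \<rightarrow>\<^sub>M Q"
    by measurable
  from measurable_compose[OF this measurable_state] show ?thesis by (simp add: case_prod_beta)
qed

lemma H_measurable[measurable]: "H \<in> borel_measurable (lebesgue_on D)"
  unfolding Hfun_def[abs_def] by measurable

lemma nn_integral_weighted_state:
  fixes b :: "'x \<Rightarrow> ennreal"
  assumes [measurable]: "b \<in> borel_measurable (lebesgue_on D)"
  shows "(\<integral>\<^sup>+(t, \<omega>, x). b x * (z t \<omega> x)^2 \<partial>Q) = (\<integral>\<^sup>+x. b x * H_nn x \<partial>lebesgue_on D)"
proof -
  have "(\<integral>\<^sup>+(t, \<omega>, x). b x * (z t \<omega> x)^2 \<partial>Q)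
      = (\<integral>\<^sup>+x. (\<integral>\<^sup>+t. (\<integral>\<^sup>+\<omega>. b x * (z t \<omega> x)^2 \<partial>P) \<partial>lebesgue_on {0..T}) \<partial>lebesgue_on D)"
    by (rule nn_integral_reorder_triple[OF time.sigma_finite_measure_axioms P.sigma_finite_measure_axioms
          space.sigma_finite_measure_axioms, where f="\<lambda>(t, \<omega>, x). b x * ennreal ((z t \<omega> x)^2)", simplified])
       measurable
  also have "\<dots> = (\<integral>\<^sup>+x. b x * H_nn x \<partial>lebesgue_on D)"
  proof (rule nn_integral_cong)
    fix x assume [measurable]: "x \<in> space (lebesgue_on D)"
    have "(\<integral>\<^sup>+t. (\<integral>\<^sup>+\<omega>. b x * (z t \<omega> x)^2 \<partial>P) \<partial>lebesgue_on {0..T})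
        = (\<integral>\<^sup>+t. b x * (\<integral>\<^sup>+\<omega>. (z t \<omega> x)^2 \<partial>P) \<partial>lebesgue_on {0..T})"
      by (intro nn_integral_cong nn_integral_cmult) measurable
    also have "\<dots> = b x * H_nn x"
      by (rule nn_integral_cmult) measurable
    finally show "(\<integral>\<^sup>+t. (\<integral>\<^sup>+\<omega>. b x * (z t \<omega> x)^2 \<partial>P) \<partial>lebesgue_on {0..T}) = b x * H_nn x" .
  qed
  finally show ?thesis .
qed

lemma nn_integral_H_nn_finite: "(\<integral>\<^sup>+x. H_nn x \<partial>lebesgue_on D) \<noteq> \<infinity>"
proof -
  have "(\<integral>\<^sup>+(t, \<omega>, x). ennreal ((z t \<omega> x)^2) \<partial>Q) < \<infinity>"
    using integrable_state by (simp add: integrable_iff_bounded case_prod_unfold)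
  then show ?thesis
    using nn_integral_weighted_state[of "\<lambda>_. 1"] by simp
qed

lemma H_eq_H_nn_AE: "AE x in lebesgue_on D. ennreal (H x) = H_nn x"
proof -
  have "AE x in lebesgue_on D. H_nn x \<noteq> \<infinity>"
    by (rule nn_integral_PInf_AE[OF _ nn_integral_H_nn_finite]) measurable
  then show ?thesis
  proof (rule AE_mp[OF _ AE_I2], intro impI)
    fix x assume [measurable]: "x \<in> space (lebesgue_on D)" and fin: "H_nn x \<noteq> \<infinity>"
    show "ennreal (H x) = H_nn x"
      unfolding Hfun_def by (rule iterated_integral_eq_nn_integral[OF P.sigma_finite_measure_axioms _ _ fin]) auto
  qed
qed

lemma H_nonneg: "0 \<le> H x"
  unfolding Hfun_def by (auto intro!: integral_nonneg_AE)

lemma H_integrable: "integrable (lebesgue_on D) H"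
proof (rule integrableI_nonneg)
  show "(\<integral>\<^sup>+x. ennreal (H x) \<partial>lebesgue_on D) < \<infinity>"
    using nn_integral_cong_AE[OF H_eq_H_nn_AE] nn_integral_H_nn_finite by (simp add: less_top)
qed (auto simp: H_measurable H_nonneg)

lemma integral_weighted_energy:
  assumes [measurable]: "\<beta> \<in> borel_measurable (lebesgue_on D)" and bounded: "\<forall>x\<in>D. \<bar>\<beta> x\<bar> \<le> 1"
  shows "(\<integral>t. Esq P D (\<lambda>\<omega> x. \<beta> x * z t \<omega> x) \<partial>lebesgue_on {0..T})
       = (\<integral>x. (\<beta> x)^2 * H x \<partial>lebesgue_on D)"
proof -
  define F where "F = (\<lambda>(t, \<omega>, x). (\<beta> x * z t \<omega> x)^2)"
  have F_measurable[measurable]: "F \<in> borel_measurable Q"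
    unfolding F_def by measurable
  have "integrable Q F"
  proof (rule Bochner_Integration.integrable_bound[OF integrable_state F_measurable], rule AE_I2)
    fix q assume "q \<in> space Q"
    then have "(\<beta> (snd (snd q)))^2 \<le> 1"
      using bounded by (auto simp: space_pair_measure abs_square_le_1)
    then show "norm (F q) \<le> norm ((z (fst q) (fst (snd q)) (snd (snd q)))^2)"
      by (auto simp: F_def case_prod_unfold power_mult_distrib intro!: mult_left_le_one_le)
  qed
  have "pair_sigma_finite (lebesgue_on {0..T}) (P \<Otimes>\<^sub>M lebesgue_on D)"
    by (intro pair_sigma_finite.intro time.sigma_finite_measure_axioms sigma_finite_pair_measure) unfold_locales
  from pair_sigma_finite.integral_fst'[OF this \<open>integrable Q F\<close>]
  have "(\<integral>t. Esq P D (\<lambda>\<omega> x. \<beta> x * z t \<omega> x) \<partial>lebesgue_on {0..T}) = integral\<^sup>L Q F"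
    by (simp add: Esq_def F_def case_prod_unfold)
  also have "\<dots> = enn2real (\<integral>\<^sup>+(t, \<omega>, x). ennreal ((\<beta> x)^2) * (z t \<omega> x)^2 \<partial>Q)"
    by (subst integral_eq_nn_integral)
       (auto simp: F_def case_prod_unfold power_mult_distrib ennreal_mult intro!: arg_cong[where f=enn2real] nn_integral_cong)
  also have "\<dots> = enn2real (\<integral>\<^sup>+x. ennreal ((\<beta> x)^2) * H_nn x \<partial>lebesgue_on D)"
    by (subst nn_integral_weighted_state) auto
  also have "\<dots> = enn2real (\<integral>\<^sup>+x. ennreal ((\<beta> x)^2 * H x) \<partial>lebesgue_on D)"
    using H_eq_H_nn_AE
    by (intro arg_cong[where f=enn2real] nn_integral_cong_AE) (auto simp: ennreal_mult H_nonneg)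
  also have "\<dots> = (\<integral>x. (\<beta> x)^2 * H x \<partial>lebesgue_on D)"
    by (rule integral_eq_nn_integral[symmetric]) (auto simp: H_nonneg)
  finally show ?thesis .
qed

lemma Jeps_eq_energy:
  assumes "\<beta> \<in> Bset D \<alpha>"
  shows "Jeps P D T zsol \<epsilon> y0 \<eta> \<beta> = 1/2 * (\<integral>x. (\<beta> x)^2 * H x \<partial>lebesgue_on D)
      + (\<epsilon> * sqrt (Esq P D \<eta>) + (\<integral>p. y0 (fst p) (snd p) * z 0 (fst p) (snd p) \<partial>(P \<Otimes>\<^sub>M lebesgue_on D)))"
  using assms integral_weighted_energy[of \<beta>] by (auto simp: Jeps_def Bset_def)

end

theorem mainTheorem7:
  fixes P F0 FT :: "'w measure" and D :: "'x::euclidean_space set" and T M \<epsilon> \<alpha> :: real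
    and zsol :: "('w \<Rightarrow> 'x \<Rightarrow> real) \<Rightarrow> real \<Rightarrow> 'w \<Rightarrow> 'x \<Rightarrow> real"
    and y0 \<eta>s :: "'w \<Rightarrow> 'x \<Rightarrow> real" and \<beta>s :: "'x \<Rightarrow> real"
  assumes P: "prob_space P"
    and F0: "subalgebra P F0" and FT: "subalgebra P FT" and F0T: "sets F0 \<subseteq> sets FT"
    and D: "open D" "bounded D" "connected D" "D \<noteq> {}"
    and T: "T > 0" and M: "M > 0"
    and eps: "\<epsilon> > 0" and alpha: "0 < \<alpha>" "\<alpha> < 1"
    and y0: "y0 \<in> L2_space F0 P D"
    and sol: "sol_regular FT P D T zsol"
    and bs: "\<beta>s \<in> Bset D \<alpha>" and es: "\<eta>s \<in> UM FT P D M"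
    and nash_sup: "\<forall>\<beta>\<in>Bset D \<alpha>. Jeps P D T zsol \<epsilon> y0 \<eta>s \<beta> \<le> Jeps P D T zsol \<epsilon> y0 \<eta>s \<beta>s"
    and nash_inf: "\<forall>\<eta>\<in>UM FT P D M. Jeps P D T zsol \<epsilon> y0 \<eta>s \<beta>s \<le> Jeps P D T zsol \<epsilon> y0 \<eta> \<beta>s"
  shows "let H = Hfun P T zsol \<eta>s; c = c_alpha D H \<alpha> in
           \<alpha> * measure lebesgue D \<le> measure lebesgue {x\<in>D. c \<le> H x}
         \<and> measure lebesgue {x\<in>D. c < H x} \<le> \<alpha> * measure lebesgue D
         \<and> (AE x in lebesgue. x \<in> D \<and> c < H x \<longrightarrow> (\<beta>s x)^2 = 1)
         \<and> (AE x in lebesgue. x \<in> D \<and> H x < c \<longrightarrow> (\<beta>s x)^2 = 0)"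
proof -
  have D_lmeasurable: "D \<in> lmeasurable" using lmeasurable_open[OF D(2,1)] .
  have "\<eta>s \<in> L2_space FT P D" using es by (simp add: UM_def)
  with sol have state: "(\<lambda>q. zsol \<eta>s (fst q) (fst (snd q)) (snd (snd q)))
          \<in> borel_measurable (lebesgue_on {0..T} \<Otimes>\<^sub>M (P \<Otimes>\<^sub>M lebesgue_on D))"
    "integrable (lebesgue_on {0..T} \<Otimes>\<^sub>M (P \<Otimes>\<^sub>M lebesgue_on D))
          (\<lambda>q. (zsol \<eta>s (fst q) (fst (snd q)) (snd (snd q)))^2)"
    unfolding sol_regular_def by blast+
  interpret adjoint_state P D T zsol \<eta>s
    using P D_lmeasurable state unfolding adjoint_state_def by blast
  note bounds = c_alpha_superlevel_bounds[OF D_lmeasurable measure_lebesgue_pos_open[OF D(1,2,4)]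
      alpha(1) _ H_measurable H_nonneg]
  have "\<forall>\<beta>\<in>Bset D \<alpha>. (\<integral>x. (\<beta> x)^2 * H x \<partial>lebesgue_on D) \<le> (\<integral>x. (\<beta>s x)^2 * H x \<partial>lebesgue_on D)"
    using nash_sup bs by (auto simp: Jeps_eq_energy)
  with bounds alpha(2) show ?thesis
    using Bset_maximiser_bang_bang[OF D_lmeasurable H_integrable _ _ bs] by (simp add: Let_def)
qed

end
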